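(* Assume $\sigma_1(x)=\tfrac12\sigma_1''(0)(x-a_1)(x-b_1)$ with $\sigma_1''(0)\ne0$ and real $a_1,b_1$, and $\tau'(0)=-\frac{\frac12\sigma_1''(0)}{1-q^{-1}}$, so that $\sigma_2$ has degree one, $\sigma_2(x)=\sigma_2'(0)(x-a_2)$ with $\sigma_2'(0)\ne0$. Let $\Lambda_q:=a_1+b_1-\frac{(1-q^{-1})\tau(0)}{\frac12\sigma_1''(0)}$ and assume $a_1<0<b_1<a_2$ and $\Lambda_q<0$. Put $a=a_1$, $b=b_1$ and $$\rho(x)=\frac{(qx/a,\,qx/b;q)_\infty}{(x/a_2;q)_\infty}.$$ Then there exist polynomials $P_n$, $n\in\mathbb{N}_0$, with $P_n$ of degree $n$ a solution of the q-EHT with $\lambda=\lambda_n$, and nonzero constants $d_n^2$, such that for all $m,n\in\mathbb{N}_0$ $$\int_a^bP_n(x)P_m(x)\rho(x)\,d_qx=d_n^2\delta_{mn},$$ i.e. orthogonality with respect to $\rho$ supported on $\{q^ka\}_{k\in\mathbb{N}_0}\cup\{q^kb\}_{k\in\mathbb{N}_0}$.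
   Context: Throughout $0<q<1$. For a function $y$ and $\zeta\in\{q,q^{-1}\}$, $D_\zeta y(x)=\frac{y(x)-y(\zeta x)}{(1-\zeta)x}$ for $x\ne0$ and $D_\zeta y(0)=y'(0)$; $[n]_q=\frac{1-q^n}{1-q}$. Let $\sigma_1$ be a real polynomial of degree at most two, $\tau(x)=\tau'(0)x+\tau(0)$ a real polynomial with $\tau'(0)\ne0$, and $\sigma_2(x):=q[\sigma_1(x)+(1-q^{-1})x\tau(x)]$. The q-EHT with parameter $n$ is $\sigma_1(x)D_{q^{-1}}D_qy(x)+\tau(x)D_qy(x)+\lambda_ny(x)=0$, $\lambda_n=-[n]_q\big(\tau'(0)+\tfrac12[n-1]_{q^{-1}}\sigma_1''(0)\big)$. $(\beta;q)_\infty=\prod_{k\ge0}(1-\beta q^k)$, $(\beta_1,\dots,\beta_r;q)_\infty=\prod_i(\beta_i;q)_\infty$. For $a<0<b$, $\int_a^b f(x)\,d_qx=(1-q)b\sum_{j\ge0}q^jf(q^jb)+(1-q)(-a)\sum_{j\ge0}q^jf(q^ja)$. *)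

theory Defs
  imports "HOL-Analysis.Analysis" "HOL-Computational_Algebra.Polynomial"
begin

definition qD :: "real \<Rightarrow> (real \<Rightarrow> real) \<Rightarrow> real \<Rightarrow> real" where
  "qD \<zeta> y x = (if x = 0 then deriv y 0 else (y x - y (\<zeta> * x)) / ((1 - \<zeta>) * x))"

definition qnum :: "real \<Rightarrow> int \<Rightarrow> real" where
  "qnum \<zeta> n = (1 - \<zeta> powi n) / (1 - \<zeta>)"

definition qpoch_inf :: "real \<Rightarrow> real \<Rightarrow> real" where
  "qpoch_inf \<beta> q = (\<Prod>k. 1 - \<beta> * q ^ k)"

text \<open>Jackson q-integral from a < 0 to b > 0.\<close>
definition qint :: "real \<Rightarrow> real \<Rightarrow> real \<Rightarrow> (real \<Rightarrow> real) \<Rightarrow> real" where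
  "qint q a b f = (1 - q) * b * (\<Sum>j. q ^ j * f (q ^ j * b))
                 + (1 - q) * (- a) * (\<Sum>j. q ^ j * f (q ^ j * a))"

end

theory Submission
  imports Defs
begin

text \<open>
  The q-EHT operator \<open>L y = \<sigma>\<^sub>1 D\<^bsub>1/q\<^esub> D\<^sub>q y + \<tau> D\<^sub>q y\<close> preserves the polynomials of degree
  at most \<open>n\<close> and is triangular in the monomial basis with diagonal entries \<open>-\<lambda>\<^sub>n\<close>. The condition
  on \<open>\<tau>'(0)\<close> gives \<open>\<lambda>\<^sub>n = \<sigma>\<^sub>1''(0)/2 \<cdot> q\<^sup>2/(1-q)\<^sup>2 \<cdot> (1 - q\<^sup>-\<^sup>n)\<close>, which are pairwise distinct,
  so \<open>L\<close> has an eigenpolynomial of every degree.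

  The weight satisfies the Pearson equation \<open>\<rho>(x) \<sigma>\<^sub>2(x) = q \<rho>(qx) \<sigma>\<^sub>1(qx)\<close> on the lattices
  \<open>q\<^sup>j a\<close> and \<open>q\<^sup>j b\<close>. Together with the discrete Lagrange identity
  \<open>(1-q) x (g Lf - f Lg)(x) = \<sigma>\<^sub>2(x) W(x) - q \<sigma>\<^sub>1(x) W(x/q)\<close>, \<open>W\<close> the q-Wronskian, it makes the
  Jackson sums of \<open>\<rho> (g Lf - f Lg)\<close> telescope on each lattice; since \<open>\<sigma>\<^sub>1(a) = \<sigma>\<^sub>1(b) = 0\<close> both
  sums equal \<open>\<rho>(0) \<sigma>\<^sub>2(0) W(0)\<close>, so \<open>L\<close> is symmetric for the q-integral. Eigenpolynomials with
  different eigenvalues are therefore orthogonal, and positivity of \<open>\<rho>\<close> on the lattices makes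
  the norms nonzero.
\<close>

section \<open>q-derivatives of polynomials\<close>

lemma qnum_of_nat: "qnum z (int n) = (1 - z ^ n) / (1 - z)"
  by (simp add: qnum_def)

definition qderiv_poly :: "real \<Rightarrow> real poly \<Rightarrow> real poly" where
  "qderiv_poly z p = (\<Sum>k\<le>degree p. monom (coeff p (Suc k) * qnum z (int (Suc k))) k)"

lemma coeff_qderiv_poly: "coeff (qderiv_poly z p) k = coeff p (Suc k) * qnum z (int (Suc k))"
  by (cases "k \<le> degree p") (auto simp: qderiv_poly_def coeff_sum coeff_monom coeff_eq_0)

lemma qderiv_poly_add: "qderiv_poly z (p + r) = qderiv_poly z p + qderiv_poly z r"
  by (rule poly_eqI) (simp add: coeff_qderiv_poly algebra_simps)

lemma qderiv_poly_smult: "qderiv_poly z (smult c p) = smult c (qderiv_poly z p)"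
  by (rule poly_eqI) (simp add: coeff_qderiv_poly)

lemma qderiv_poly_monom: "qderiv_poly z (monom c n) = monom (c * qnum z (int n)) (n - 1)"
  by (rule poly_eqI) (cases n, auto simp: coeff_qderiv_poly coeff_monom qnum_def)

lemma qD_poly:
  assumes "z \<noteq> 1"
  shows "qD z (poly p) = poly (qderiv_poly z p)"
proof
  fix x
  have expand: "poly p y = coeff p 0 + (\<Sum>k\<le>degree p. coeff p (Suc k) * y ^ Suc k)" for y
  proof -
    have "poly p y = (\<Sum>k\<le>Suc (degree p). coeff p k * y ^ k)"
      using poly_altdef[of p y] by (simp add: sum.atMost_Suc coeff_eq_0)
    then show ?thesis by (subst (asm) sum.atMost_Suc_shift) simp
  qed
  show "qD z (poly p) x = poly (qderiv_poly z p) x"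
  proof (cases "x = 0")
    case True
    have "deriv (poly p) 0 = poly (pderiv p) 0"
      by (rule DERIV_imp_deriv) (rule poly_DERIV)
    then show ?thesis
      using True assms by (simp add: qD_def poly_0_coeff_0 coeff_pderiv coeff_qderiv_poly qnum_def)
  next
    case False
    have "poly p x - poly p (z * x) = (\<Sum>k\<le>degree p. coeff p (Suc k) * (x ^ Suc k - (z * x) ^ Suc k))"
      by (simp add: expand sum_subtractf algebra_simps)
    also have "\<dots> = (\<Sum>k\<le>degree p. ((1 - z) * x) * (coeff p (Suc k) * qnum z (int (Suc k)) * x ^ k))"
      using assms unfolding qnum_of_nat
      by (intro sum.cong) (simp_all add: power_mult_distrib field_simps)
    also have "\<dots> = ((1 - z) * x) * poly (qderiv_poly z p) x"
      by (simp add: qderiv_poly_def poly_sum poly_monom sum_distrib_left)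
    finally show ?thesis using False assms by (simp add: qD_def)
  qed
qed

section \<open>The q-EHT operator on polynomials\<close>

definition qEHT_op :: "real \<Rightarrow> (real \<Rightarrow> real) \<Rightarrow> (real \<Rightarrow> real) \<Rightarrow> (real \<Rightarrow> real) \<Rightarrow> real \<Rightarrow> real" where
  "qEHT_op q \<sigma> \<tau> y x = \<sigma> x * qD (1 / q) (qD q y) x + \<tau> x * qD q y x"

definition qEHT_poly :: "real \<Rightarrow> real poly \<Rightarrow> real poly \<Rightarrow> real poly \<Rightarrow> real poly" where
  "qEHT_poly q \<sigma> \<tau> p = \<sigma> * qderiv_poly (1 / q) (qderiv_poly q p) + \<tau> * qderiv_poly q p"

lemma poly_qEHT_poly:
  assumes "0 < q" "q \<noteq> 1"
  shows "poly (qEHT_poly q \<sigma> \<tau> p) = qEHT_op q (poly \<sigma>) (poly \<tau>) (poly p)"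
  using assms by (simp add: qEHT_poly_def qEHT_op_def qD_poly fun_eq_iff)

lemma qEHT_poly_add: "qEHT_poly q \<sigma> \<tau> (p + r) = qEHT_poly q \<sigma> \<tau> p + qEHT_poly q \<sigma> \<tau> r"
  by (simp add: qEHT_poly_def qderiv_poly_add algebra_simps)

lemma qEHT_poly_smult: "qEHT_poly q \<sigma> \<tau> (smult c p) = smult c (qEHT_poly q \<sigma> \<tau> p)"
  by (simp add: qEHT_poly_def qderiv_poly_smult smult_add_right)

text \<open>The paper's eigenvalue \<open>\<lambda>\<^sub>n\<close> is \<open>- qEHT_diag q \<sigma> \<tau> n\<close>.\<close>

definition qEHT_diag :: "real \<Rightarrow> real poly \<Rightarrow> real poly \<Rightarrow> nat \<Rightarrow> real" where
  "qEHT_diag q \<sigma> \<tau> n = qnum q (int n) * (coeff \<tau> 1 + coeff \<sigma> 2 * qnum (1 / q) (int n - 1))"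

lemma qEHT_poly_monom:
  "qEHT_poly q \<sigma> \<tau> (monom 1 n)
     = \<sigma> * monom (qnum q (int n) * qnum (1 / q) (int (n - 1))) (n - 2) + \<tau> * monom (qnum q (int n)) (n - 1)"
  by (simp add: qEHT_poly_def qderiv_poly_monom numeral_2_eq_2)

lemma degree_qEHT_poly_monom:
  assumes "degree \<sigma> \<le> 2" "degree \<tau> \<le> 1"
  shows "degree (qEHT_poly q \<sigma> \<tau> (monom 1 n)) \<le> n"
proof -
  have "degree (\<sigma> * monom (qnum q (int n) * qnum (1 / q) (int (n - 1))) (n - 2)) \<le> n"
  proof (cases "n < 2")
    case True
    then show ?thesis by (auto simp: qnum_def less_2_cases_iff)
  next
    case False
    then show ?thesis
      using assms degree_monom_le[of "qnum q (int n) * qnum (1 / q) (int (n - 1))" "n - 2"]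
      by (intro order.trans[OF degree_mult_le]) arith
  qed
  moreover have "degree (\<tau> * monom (qnum q (int n)) (n - 1)) \<le> n"
  proof (cases "n = 0")
    case True
    then show ?thesis by (simp add: qnum_def)
  next
    case False
    then show ?thesis
      using assms degree_monom_le[of "qnum q (int n)" "n - 1"]
      by (intro order.trans[OF degree_mult_le]) arith
  qed
  ultimately show ?thesis unfolding qEHT_poly_monom by (rule degree_add_le)
qed

lemma coeff_mult_monom: "coeff (p * monom c k) n = (if n < k then 0 else c * coeff p (n - k))"
  by (simp add: mult.commute[of p] coeff_monom_mult)

lemma coeff_qEHT_poly_monom: "coeff (qEHT_poly q \<sigma> \<tau> (monom 1 n)) n = qEHT_diag q \<sigma> \<tau> n"
proof -
  consider "n = 0" | "n = 1" | "n \<ge> 2" by linarith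
  then show ?thesis
  proof cases
    case 1
    then show ?thesis unfolding qEHT_poly_monom by (simp add: qEHT_diag_def qnum_def)
  next
    case 2
    then show ?thesis by (simp add: qEHT_poly_monom qEHT_diag_def coeff_mult_monom qnum_def)
  next
    case 3
    then have "n - (n - 2) = 2" "n - (n - 1) = 1" "\<not> n < n - 2" "\<not> n < n - 1" "int n - 1 = int (n - 1)"
      by auto
    then show ?thesis
      unfolding qEHT_poly_monom qEHT_diag_def coeff_add coeff_mult_monom
      by (simp only: if_False ring_distribs mult_ac)
  qed
qed

lemma triangular_operator_range:
  fixes M :: "real poly \<Rightarrow> real poly" and \<mu> :: "nat \<Rightarrow> real"
  assumes add: "\<And>p r. M (p + r) = M p + M r"
    and smult: "\<And>c p. M (smult c p) = smult c (M p)"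
    and deg: "\<And>i. degree (M (monom 1 i)) \<le> i"
    and diag: "\<And>i. coeff (M (monom 1 i)) i = \<mu> i"
    and nonzero: "\<And>i. i < k \<Longrightarrow> \<mu> i \<noteq> 0"
    and g: "\<And>i. k \<le> i \<Longrightarrow> coeff g i = 0"
  shows "\<exists>h. (\<forall>i\<ge>k. coeff h i = 0) \<and> M h = g"
  using nonzero g
proof (induction k arbitrary: g)
  case 0
  then have "g = 0" by (intro poly_eqI) simp
  moreover have "M 0 = 0" using smult[of 0 0] by simp
  ultimately show ?case by (intro exI[of _ 0]) simp
next
  case (Suc k)
  define h0 where "h0 = monom (coeff g k / \<mu> k) k"
  have M_h0: "M h0 = smult (coeff g k / \<mu> k) (M (monom 1 k))"
    unfolding h0_def smult[symmetric] by (simp add: smult_monom)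
  have "coeff (g - M h0) i = 0" if "k \<le> i" for i
  proof (cases "i = k")
    case True
    then show ?thesis using diag[of k] Suc.prems(1)[of k] by (simp add: M_h0)
  next
    case False
    then have "degree (M (monom 1 k)) < i" using that deg[of k] by linarith
    then show ?thesis using Suc.prems(2)[of i] False that by (simp add: M_h0 coeff_eq_0)
  qed
  then obtain h1 where h1: "\<forall>i\<ge>k. coeff h1 i = 0" "M h1 = g - M h0"
    using Suc.IH[of "g - M h0"] Suc.prems(1) by auto
  have "\<forall>i\<ge>Suc k. coeff (h0 + h1) i = 0" using h1(1) by (simp add: h0_def coeff_monom)
  moreover have "M (h0 + h1) = g" by (simp add: add h1(2))
  ultimately show ?case by blast
qed

lemma triangular_operator_eigenpoly:
  fixes M :: "real poly \<Rightarrow> real poly" and \<mu> :: "nat \<Rightarrow> real"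
  assumes add: "\<And>p r. M (p + r) = M p + M r"
    and smult: "\<And>c p. M (smult c p) = smult c (M p)"
    and deg: "\<And>i. degree (M (monom 1 i)) \<le> i"
    and diag: "\<And>i. coeff (M (monom 1 i)) i = \<mu> i"
    and distinct: "\<And>i. i < n \<Longrightarrow> \<mu> i \<noteq> \<mu> n"
  shows "\<exists>P. degree P = n \<and> lead_coeff P = 1 \<and> M P = smult (\<mu> n) P"
proof -
  define M' where "M' p = M p - smult (\<mu> n) p" for p
  have M'_add: "M' (p + r) = M' p + M' r" for p r
    by (simp add: M'_def add smult_add_right)
  have M'_smult: "M' (smult c p) = smult c (M' p)" for c p
    by (simp add: M'_def smult smult_diff_right mult.commute)
  have M'_deg: "degree (M' (monom 1 i)) \<le> i" for i
    unfolding M'_def using deg[of i] degree_monom_le[of "\<mu> n" i]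
    by (intro degree_diff_le) (auto simp: smult_monom)
  have M'_diag: "coeff (M' (monom 1 i)) i = \<mu> i - \<mu> n" for i
    by (simp add: M'_def diag)
  have top: "coeff (M' (monom 1 n)) i = 0" if "n \<le> i" for i
    using that M'_deg[of n] M'_diag[of n] by (cases "i = n") (auto simp: coeff_eq_0)
  then obtain h where h: "\<forall>i\<ge>n. coeff h i = 0" "M' h = M' (monom 1 n)"
    using triangular_operator_range[of M' "\<lambda>i. \<mu> i - \<mu> n" n "M' (monom 1 n)",
        OF M'_add M'_smult M'_deg M'_diag] distinct top by force
  define P where "P = monom 1 n - h"
  have "degree P \<le> n" using h(1) by (intro degree_le) (auto simp: P_def coeff_monom)
  moreover have "coeff P n = 1" using h(1) by (simp add: P_def)
  moreover from this have "n \<le> degree P" by (intro le_degree) simp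
  moreover have "M' P = 0"
    using M'_add[of P h] M'_smult[of 0 0] h(2) by (simp add: P_def)
  ultimately show ?thesis by (intro exI[of _ P]) (simp add: M'_def)
qed

lemma qEHT_poly_eigenpoly:
  assumes "degree \<sigma> \<le> 2" "degree \<tau> \<le> 1"
    and "\<And>i. i < n \<Longrightarrow> qEHT_diag q \<sigma> \<tau> i \<noteq> qEHT_diag q \<sigma> \<tau> n"
  shows "\<exists>P. degree P = n \<and> lead_coeff P = 1 \<and> qEHT_poly q \<sigma> \<tau> P = smult (qEHT_diag q \<sigma> \<tau> n) P"
  using assms
  by (intro triangular_operator_eigenpoly qEHT_poly_add qEHT_poly_smult degree_qEHT_poly_monom
      coeff_qEHT_poly_monom) auto

lemma qEHT_diag_closed_form:
  assumes "0 < q" "q < 1" "coeff \<tau> 1 = - coeff \<sigma> 2 / (1 - 1 / q)"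
  shows "qEHT_diag q \<sigma> \<tau> n = coeff \<sigma> 2 * q\<^sup>2 / (1 - q)\<^sup>2 * (1 / q ^ n - 1)"
proof (cases n)
  case 0
  then show ?thesis by (simp add: qEHT_diag_def qnum_def)
next
  case (Suc m)
  define e where "e = 1 - q"
  have ne: "e \<noteq> 0" "q \<noteq> 0" "q ^ m \<noteq> 0" "1 - 1 / q = - e / q"
    using assms(1,2) by (auto simp: e_def field_simps)
  have "int n - 1 = int m" using Suc by simp
  then have "qEHT_diag q \<sigma> \<tau> n = (1 - q * q ^ m) / e *
      (- coeff \<sigma> 2 / (- e / q) + coeff \<sigma> 2 * ((1 - 1 / q ^ m) / (- e / q)))"
    unfolding qEHT_diag_def \<open>int n - 1 = int m\<close> assms(3) qnum_of_nat ne(4)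
    by (simp add: Suc e_def power_one_over)
  also have "\<dots> = coeff \<sigma> 2 * q\<^sup>2 / e\<^sup>2 * (1 / (q * q ^ m) - 1)"
    using ne by (simp add: field_simps power2_eq_square)
  finally show ?thesis by (simp add: Suc e_def)
qed

lemma inj_qEHT_diag:
  assumes "0 < q" "q < 1" "coeff \<tau> 1 = - coeff \<sigma> 2 / (1 - 1 / q)" "coeff \<sigma> 2 \<noteq> 0"
  shows "inj (qEHT_diag q \<sigma> \<tau>)"
  using assms power_inject_exp'[of q] by (intro injI) (simp add: qEHT_diag_closed_form)

section \<open>The q-Pochhammer weight\<close>

lemma convergent_prod_qpoch:
  fixes q \<beta> :: real
  assumes "0 < q" "q < 1"
  shows "convergent_prod (\<lambda>k. 1 - \<beta> * q ^ k)"
proof -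
  have "summable (\<lambda>k. norm ((1 - \<beta> * q ^ k) - 1))"
    using assms by (simp add: abs_mult power_abs summable_geometric)
  then show ?thesis
    by (intro abs_convergent_prod_imp_convergent_prod summable_imp_abs_convergent_prod)
qed

lemma qpoch_factor_pos:
  fixes q \<beta> :: real
  assumes "0 < q" "q < 1" "\<beta> < 1"
  shows "0 < 1 - \<beta> * q ^ k"
proof (cases "\<beta> \<le> 0")
  case True
  then have "\<beta> * q ^ k \<le> 0" using assms by (simp add: mult_nonpos_nonneg)
  then show ?thesis by linarith
next
  case False
  then have "\<beta> * q ^ k \<le> \<beta>" using assms by (simp add: mult_left_le power_le_one)
  then show ?thesis using assms by linarith
qed

lemma qpoch_inf_pos:
  assumes "0 < q" "q < 1" "\<beta> < 1"
  shows "0 < qpoch_inf \<beta> q"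
  unfolding qpoch_inf_def using convergent_prod_qpoch[OF assms(1,2)] qpoch_factor_pos[OF assms]
  by (intro less_0_prodinf) auto

lemma qpoch_inf_unfold:
  assumes "0 < q" "q < 1" "\<beta> < 1"
  shows "qpoch_inf \<beta> q = (1 - \<beta>) * qpoch_inf (\<beta> * q) q"
proof -
  have "(\<Prod>k. 1 - \<beta> * q ^ Suc k) = qpoch_inf \<beta> q / (1 - \<beta>)"
    unfolding qpoch_inf_def
    using prodinf_split_head[OF convergent_prod_qpoch[OF assms(1,2)]] qpoch_factor_pos[OF assms, of 0]
    by simp
  moreover have "(\<lambda>k. 1 - \<beta> * q ^ Suc k) = (\<lambda>k. 1 - \<beta> * q * q ^ k)" by (simp add: mult.assoc)
  ultimately show ?thesis using qpoch_factor_pos[OF assms, of 0] unfolding qpoch_inf_def by simp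
qed

lemma qpoch_inf_tendsto_1:
  assumes "0 < q" "q < 1" "\<beta> < 1"
  shows "(\<lambda>N. qpoch_inf (\<beta> * q ^ N) q) \<longlonglongrightarrow> 1"
proof -
  let ?f = "\<lambda>k. 1 - \<beta> * q ^ k"
  have conv: "convergent_prod ?f" by (rule convergent_prod_qpoch[OF assms(1,2)])
  have nz: "?f k \<noteq> 0" for k using qpoch_factor_pos[OF assms, of k] by simp
  have "prodinf ?f \<noteq> 0" using prodinf_nonzero[OF conv] nz by blast
  moreover have "(\<lambda>N. \<Prod>k<N. ?f k) \<longlonglongrightarrow> prodinf ?f"
    using convergent_prod_LIMSEQ[OF conv] LIMSEQ_lessThan_iff_atMost by blast
  ultimately have "(\<lambda>N. prodinf ?f / (\<Prod>k<N. ?f k)) \<longlonglongrightarrow> prodinf ?f / prodinf ?f"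
    by (intro tendsto_divide tendsto_const)
  moreover have "qpoch_inf (\<beta> * q ^ N) q = prodinf ?f / (\<Prod>k<N. ?f k)" for N
    using prodinf_divide_initial_segment[OF conv, of N] nz
    by (simp add: qpoch_inf_def power_add mult_ac)
  ultimately show ?thesis using \<open>prodinf ?f \<noteq> 0\<close> by simp
qed

definition qweight :: "real \<Rightarrow> real \<Rightarrow> real \<Rightarrow> real \<Rightarrow> real \<Rightarrow> real" where
  "qweight q a b c x = qpoch_inf (q * x / a) q * qpoch_inf (q * x / b) q / qpoch_inf (x / c) q"

definition qweight_domain :: "real \<Rightarrow> real \<Rightarrow> real \<Rightarrow> real \<Rightarrow> real \<Rightarrow> bool" where
  "qweight_domain q a b c x \<longleftrightarrow> q * x / a < 1 \<and> q * x / b < 1 \<and> x / c < 1"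

lemma qlattice_in_qweight_domain:
  fixes q a b c x :: real
  assumes "0 < q" "q < 1" "a < 0" "0 < b" "b < c" "x \<in> {a, b}"
  shows "qweight_domain q a b c (q ^ j * x)"
proof -
  have q_pow: "0 < q ^ j" "q ^ j \<le> 1" "q * q ^ j < 1"
    using assms(1,2) power_le_one[of q j] power_Suc_less_one[of q j] by auto
  have neg: "q * (q ^ j * a) < 0" "q ^ j * a < 0" and pos: "0 < q * (q ^ j * b)"
    using assms q_pow by (simp_all add: mult_pos_neg)
  have "q ^ j * b \<le> b" using assms q_pow by (simp add: mult_left_le_one_le)
  then have "a < q * (q ^ j * b)" "q ^ j * b < c" using assms pos by linarith+
  then have "q * (q ^ j * b) / a < 1 \<and> q ^ j * b / c < 1"
    using assms by (simp add: pos_divide_less_eq neg_divide_less_eq)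
  moreover have "q * (q ^ j * a) / b < 1 \<and> q ^ j * a / c < 1"
    using assms neg by (simp add: pos_divide_less_eq)
  ultimately show ?thesis
    using assms q_pow unfolding qweight_domain_def by (auto simp: mult.assoc[symmetric])
qed

lemma qweight_pos:
  assumes "0 < q" "q < 1" "qweight_domain q a b c x"
  shows "0 < qweight q a b c x"
  using assms qpoch_inf_pos[OF assms(1,2)] by (simp add: qweight_def qweight_domain_def)

lemma qweight_recurrence:
  assumes "0 < q" "q < 1" "qweight_domain q a b c x"
  shows "qweight q a b c x * (1 - x / c) = (1 - q * x / a) * (1 - q * x / b) * qweight q a b c (q * x)"
proof -
  from assms(3) have dom: "q * x / a < 1" "q * x / b < 1" "x / c < 1"
    by (simp_all add: qweight_domain_def)
  have A: "qpoch_inf (q * x / a) q = (1 - q * x / a) * qpoch_inf (q * (q * x) / a) q"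
    using qpoch_inf_unfold[OF assms(1,2) dom(1)] by (simp add: mult_ac)
  have B: "qpoch_inf (q * x / b) q = (1 - q * x / b) * qpoch_inf (q * (q * x) / b) q"
    using qpoch_inf_unfold[OF assms(1,2) dom(2)] by (simp add: mult_ac)
  have C: "qpoch_inf (x / c) q = (1 - x / c) * qpoch_inf (q * x / c) q"
    using qpoch_inf_unfold[OF assms(1,2) dom(3)] by (simp add: mult_ac)
  have cancel: "\<alpha> * A' * (\<beta> * B') / (\<gamma> * C') * \<gamma> = \<alpha> * \<beta> * (A' * B' / C')" if "\<gamma> \<noteq> 0"
    for \<alpha> \<beta> \<gamma> A' B' C' :: real
    using that by (cases "C' = 0") (simp_all add: field_simps)
  show ?thesis
    unfolding qweight_def A B C using dom(3) by (intro cancel) linarith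
qed

lemma qweight_qlattice_tendsto:
  assumes "0 < q" "q < 1" "qweight_domain q a b c x"
  shows "(\<lambda>N. qweight q a b c (q ^ N * x)) \<longlonglongrightarrow> 1"
proof -
  have "(\<lambda>N. qpoch_inf (q * x / a * q ^ N) q * qpoch_inf (q * x / b * q ^ N) q
          / qpoch_inf (x / c * q ^ N) q) \<longlonglongrightarrow> 1 * 1 / 1"
    using assms by (intro tendsto_intros qpoch_inf_tendsto_1) (auto simp: qweight_domain_def)
  then show ?thesis by (simp add: qweight_def mult_ac)
qed

section \<open>Symmetry of the q-EHT operator for the Jackson integral\<close>

definition qsigma2 :: "real \<Rightarrow> (real \<Rightarrow> real) \<Rightarrow> (real \<Rightarrow> real) \<Rightarrow> real \<Rightarrow> real" where
  "qsigma2 q \<sigma> \<tau> x = q * (\<sigma> x + (1 - 1 / q) * x * \<tau> x)"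

definition qwronskian :: "real \<Rightarrow> (real \<Rightarrow> real) \<Rightarrow> (real \<Rightarrow> real) \<Rightarrow> real \<Rightarrow> real" where
  "qwronskian q f g x = f x * qD q g x - g x * qD q f x"

lemma qwronskian_poly:
  assumes "q \<noteq> 1"
  shows "qwronskian q (poly f) (poly g) = poly (f * qderiv_poly q g - g * qderiv_poly q f)"
  using assms by (simp add: fun_eq_iff qwronskian_def qD_poly)

lemma qEHT_lagrange_identity:
  assumes "0 < q" "q < 1" "x \<noteq> 0"
  shows "(1 - q) * x * (g x * qEHT_op q \<sigma> \<tau> f x - f x * qEHT_op q \<sigma> \<tau> g x)
       = qsigma2 q \<sigma> \<tau> x * qwronskian q f g x - q * \<sigma> x * qwronskian q f g (x / q)"
proof -
  define e where "e = (1 - q) * x"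
  have e: "e \<noteq> 0" "q \<noteq> 0" using assms by (auto simp: e_def)
  have x: "x / q \<noteq> 0" "1 / q * x = x / q" "q * (x / q) = x" "(1 - q) * (x / q) = e / q"
    "(1 - 1 / q) * x = - (e / q)"
    using assms by (auto simp: e_def field_simps)
  have D: "qD q h x = (h x - h (q * x)) / e" "qD q h (x / q) = (h (x / q) - h x) / (e / q)"
    "qD (1 / q) h x = (h x - h (x / q)) / - (e / q)" for h
    using assms x by (simp_all add: qD_def e_def)
  show ?thesis
    unfolding qEHT_op_def qwronskian_def qsigma2_def D e_def[symmetric] x(5)
    using e by (simp add: field_simps)
qed

lemma summable_qlattice:
  fixes X :: "nat \<Rightarrow> real"
  assumes "0 < q" "q < 1" "X \<longlonglongrightarrow> l"
  shows "summable (\<lambda>j. q ^ j * X j)"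
proof -
  obtain K where K: "\<And>j. norm (X j) \<le> K"
    using convergent_imp_Bseq[OF convergentI[OF assms(3)]] by (auto simp: Bseq_def)
  show ?thesis
  proof (rule summable_comparison_test)
    show "\<exists>N. \<forall>j\<ge>N. norm (q ^ j * X j) \<le> K * q ^ j"
      using K assms(1) by (auto simp: abs_mult mult.commute intro!: mult_right_mono)
    show "summable (\<lambda>j. K * q ^ j)" using assms by (intro summable_mult summable_geometric) auto
  qed
qed

lemma qint_cmult:
  assumes "summable (\<lambda>j. q ^ j * F (q ^ j * b))" "summable (\<lambda>j. q ^ j * F (q ^ j * a))"
  shows "qint q a b (\<lambda>x. C * F x) = C * qint q a b F"
  using suminf_mult[OF assms(1), of C] suminf_mult[OF assms(2), of C]
  by (simp add: qint_def algebra_simps)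

lemma qint_pos:
  fixes F :: "real \<Rightarrow> real"
  assumes "0 < q" "q < 1" "a < 0" "0 < b"
    and "summable (\<lambda>j. q ^ j * F (q ^ j * a))" "summable (\<lambda>j. q ^ j * F (q ^ j * b))"
    and "\<And>j. 0 \<le> F (q ^ j * a)" "\<And>j. 0 \<le> F (q ^ j * b)" "0 < F (q ^ i * b)"
  shows "0 < qint q a b F"
proof -
  have "0 < (\<Sum>j. q ^ j * F (q ^ j * b))"
    using assms by (intro suminf_pos2[where i = i]) auto
  moreover have "0 \<le> (\<Sum>j. q ^ j * F (q ^ j * a))"
    using assms by (intro suminf_nonneg) auto
  ultimately show ?thesis
    using assms(1-4) unfolding qint_def by (intro add_pos_nonneg mult_nonneg_nonneg) auto
qed

lemma poly_qlattice_nonzero: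
  fixes p :: "real poly"
  assumes "0 < q" "q < 1" "x \<noteq> 0" "p \<noteq> 0"
  shows "\<exists>i. poly p (q ^ i * x) \<noteq> 0"
proof (rule ccontr)
  assume "\<not> ?thesis"
  then have "range (\<lambda>i. q ^ i * x) \<subseteq> {y. poly p y = 0}" by auto
  moreover have "inj (\<lambda>i. q ^ i * x)"
    using assms power_inject_exp'[of q] by (auto intro: injI)
  ultimately show False
    using poly_roots_finite[OF assms(4)] finite_imageD finite_subset by blast
qed

locale qEHT_pearson_weight =
  fixes q a b :: real and \<sigma> \<tau> :: "real poly" and \<rho> :: "real \<Rightarrow> real" and \<rho>0 :: real
  assumes q: "0 < q" "q < 1"
    and ends: "a < 0" "0 < b"
    and \<sigma>_ends: "poly \<sigma> a = 0" "poly \<sigma> b = 0"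
    and pearson: "\<And>c j. c \<in> {a, b} \<Longrightarrow>
      \<rho> (q ^ j * c) * qsigma2 q (poly \<sigma>) (poly \<tau>) (q ^ j * c)
        = q * \<rho> (q ^ Suc j * c) * poly \<sigma> (q ^ Suc j * c)"
    and \<rho>_tendsto: "\<And>c. c \<in> {a, b} \<Longrightarrow> (\<lambda>j. \<rho> (q ^ j * c)) \<longlonglongrightarrow> \<rho>0"
begin

abbreviation L :: "real poly \<Rightarrow> real poly" where
  "L \<equiv> qEHT_poly q \<sigma> \<tau>"

lemma poly_L: "poly (L p) = qEHT_op q (poly \<sigma>) (poly \<tau>) (poly p)"
  using q by (intro poly_qEHT_poly) auto

lemma summable_qlattice_weight:
  assumes "c \<in> {a, b}"
  shows "summable (\<lambda>j. q ^ j * (poly f (q ^ j * c) * poly g (q ^ j * c) * \<rho> (q ^ j * c)))"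
proof -
  have "(\<lambda>j. q ^ j * c) \<longlonglongrightarrow> 0 * c" using q by (intro tendsto_intros LIMSEQ_power_zero) auto
  then have lim: "(\<lambda>j. poly h (q ^ j * c)) \<longlonglongrightarrow> poly h 0" for h
    by (intro isCont_tendsto_compose[OF poly_isCont]) simp
  show ?thesis
    by (rule summable_qlattice[OF q tendsto_mult[OF tendsto_mult[OF lim lim] \<rho>_tendsto[OF assms]]])
qed

lemma qlattice_lagrange_sums:
  assumes c: "c \<in> {a, b}"
  shows "(\<lambda>j. (1 - q) * (q ^ j * c) * (\<rho> (q ^ j * c) *
            (poly g (q ^ j * c) * poly (L f) (q ^ j * c) - poly f (q ^ j * c) * poly (L g) (q ^ j * c))))
         sums (\<rho>0 * qsigma2 q (poly \<sigma>) (poly \<tau>) 0 * qwronskian q (poly f) (poly g) 0)"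
    (is "?T sums ?S")
proof -
  txt \<open>The Lagrange identity and the Pearson equation turn the \<open>j\<close>-th summand into
    \<open>E j - E (j - 1)\<close>, where the missing \<open>E (-1)\<close> vanishes because \<open>\<sigma>\<close> does at \<open>c\<close>.\<close>
  define E where "E j = \<rho> (q ^ j * c) * qsigma2 q (poly \<sigma>) (poly \<tau>) (q ^ j * c)
                        * qwronskian q (poly f) (poly g) (q ^ j * c)" for j
  have c0: "c \<noteq> 0" using c ends by auto
  have T: "?T j = \<rho> (q ^ j * c) *
      (qsigma2 q (poly \<sigma>) (poly \<tau>) (q ^ j * c) * qwronskian q (poly f) (poly g) (q ^ j * c)
       - q * poly \<sigma> (q ^ j * c) * qwronskian q (poly f) (poly g) (q ^ j * c / q))" for j
  proof -
    let ?y = "q ^ j * c"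
    have "?y \<noteq> 0" using c0 q by simp
    have "?T j = \<rho> ?y * ((1 - q) * ?y * (poly g ?y * qEHT_op q (poly \<sigma>) (poly \<tau>) (poly f) ?y
                                          - poly f ?y * qEHT_op q (poly \<sigma>) (poly \<tau>) (poly g) ?y))"
      by (simp only: poly_L mult_ac)
    then show ?thesis by (simp only: qEHT_lagrange_identity[OF q \<open>?y \<noteq> 0\<close>])
  qed
  have T0: "?T 0 = E 0" using T[of 0] c \<sigma>_ends by (auto simp: E_def)
  have TSuc: "?T (Suc j) = E (Suc j) - E j" for j
    using T[of "Suc j"] pearson[OF c, of j] q by (simp add: E_def algebra_simps)
  have lattice_0: "(\<lambda>j. q ^ j * c) \<longlonglongrightarrow> 0"
    using q by (intro tendsto_mult_left_zero LIMSEQ_power_zero) auto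
  have "isCont (qsigma2 q (poly \<sigma>) (poly \<tau>)) 0"
    unfolding qsigma2_def[abs_def] by (intro continuous_intros)
  from isCont_tendsto_compose[OF this lattice_0]
  have \<sigma>2_lim: "(\<lambda>j. qsigma2 q (poly \<sigma>) (poly \<tau>) (q ^ j * c))
                    \<longlonglongrightarrow> qsigma2 q (poly \<sigma>) (poly \<tau>) 0" .
  have "isCont (qwronskian q (poly f) (poly g)) 0"
    using q by (simp add: qwronskian_poly)
  from isCont_tendsto_compose[OF this lattice_0]
  have W_lim: "(\<lambda>j. qwronskian q (poly f) (poly g) (q ^ j * c))
                  \<longlonglongrightarrow> qwronskian q (poly f) (poly g) 0" .
  have "E \<longlonglongrightarrow> ?S"
    unfolding E_def by (rule tendsto_mult[OF tendsto_mult[OF \<rho>_tendsto[OF c] \<sigma>2_lim] W_lim])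
  from telescope_sums[OF this] have "(\<lambda>j. ?T (Suc j)) sums (?S - ?T 0)"
    by (simp only: TSuc[symmetric] T0[symmetric])
  then show ?thesis using sums_Suc_iff[of ?T] by simp
qed

lemma qint_qEHT_symmetric:
  "qint q a b (\<lambda>x. poly (L f) x * poly g x * \<rho> x) = qint q a b (\<lambda>x. poly f x * poly (L g) x * \<rho> x)"
proof -
  let ?S = "\<rho>0 * qsigma2 q (poly \<sigma>) (poly \<tau>) 0 * qwronskian q (poly f) (poly g) 0"
  let ?F = "\<lambda>c j. q ^ j * (poly (L f) (q ^ j * c) * poly g (q ^ j * c) * \<rho> (q ^ j * c))"
  let ?G = "\<lambda>c j. q ^ j * (poly f (q ^ j * c) * poly (L g) (q ^ j * c) * \<rho> (q ^ j * c))"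
  have side: "(1 - q) * c * suminf (?F c) - (1 - q) * c * suminf (?G c) = ?S" if c: "c \<in> {a, b}" for c
  proof -
    have "(\<lambda>j. (1 - q) * c * ?F c j - (1 - q) * c * ?G c j)
          sums ((1 - q) * c * suminf (?F c) - (1 - q) * c * suminf (?G c))"
      by (intro sums_diff sums_mult summable_sums summable_qlattice_weight[OF c])
    moreover note qlattice_lagrange_sums[OF c, of g f]
    ultimately show ?thesis by (simp add: algebra_simps sums_iff)
  qed
  show ?thesis
    using side[of a] side[of b] unfolding qint_def by (simp add: algebra_simps)
qed

lemma qint_norm_pos:
  assumes \<rho>_pos: "\<And>c j. c \<in> {a, b} \<Longrightarrow> 0 < \<rho> (q ^ j * c)" and "p \<noteq> 0"
  shows "0 < qint q a b (\<lambda>x. poly p x * poly p x * \<rho> x)"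
proof -
  obtain i where "poly p (q ^ i * b) \<noteq> 0"
    using poly_qlattice_nonzero[OF q _ assms(2), of b] ends by auto
  then have "0 < poly p (q ^ i * b) * poly p (q ^ i * b)"
    using not_real_square_gt_zero by blast
  then have "0 < poly p (q ^ i * b) * poly p (q ^ i * b) * \<rho> (q ^ i * b)"
    using \<rho>_pos[of b i] by simp
  moreover have "0 \<le> poly p (q ^ j * c) * poly p (q ^ j * c) * \<rho> (q ^ j * c)" if "c \<in> {a, b}" for c j
    using \<rho>_pos[OF that, of j] by simp
  ultimately show ?thesis
    using q ends by (intro qint_pos[where i = i] summable_qlattice_weight) auto
qed

lemma qint_eigenpolys_orthogonal:
  assumes "L f = smult \<mu> f" "L g = smult \<nu> g" "\<mu> \<noteq> \<nu>"
  shows "qint q a b (\<lambda>x. poly f x * poly g x * \<rho> x) = 0"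
proof -
  let ?I = "qint q a b (\<lambda>x. poly f x * poly g x * \<rho> x)"
  have cmult: "qint q a b (\<lambda>x. C * (poly f x * poly g x * \<rho> x)) = C * ?I" for C
    by (rule qint_cmult) (simp_all add: summable_qlattice_weight)
  have "qint q a b (\<lambda>x. \<mu> * (poly f x * poly g x * \<rho> x))
      = qint q a b (\<lambda>x. \<nu> * (poly f x * poly g x * \<rho> x))"
    using qint_qEHT_symmetric[of f g] assms(1,2) by (simp add: mult_ac)
  then have "\<mu> * ?I = \<nu> * ?I" by (simp only: cmult)
  then show ?thesis using assms(3) by simp
qed

lemma qEHT_orthogonal_eigenpolys:
  assumes "degree \<sigma> \<le> 2" "degree \<tau> \<le> 1" "inj (qEHT_diag q \<sigma> \<tau>)"
    and \<rho>_pos: "\<And>c j. c \<in> {a, b} \<Longrightarrow> 0 < \<rho> (q ^ j * c)"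
  obtains P where "\<And>n. degree (P n) = n" "\<And>n. L (P n) = smult (qEHT_diag q \<sigma> \<tau> n) (P n)"
    "\<And>n. 0 < qint q a b (\<lambda>x. poly (P n) x * poly (P n) x * \<rho> x)"
    "\<And>m n. m \<noteq> n \<Longrightarrow> qint q a b (\<lambda>x. poly (P n) x * poly (P m) x * \<rho> x) = 0"
proof -
  have "\<exists>P. degree P = n \<and> lead_coeff P = 1 \<and> L P = smult (qEHT_diag q \<sigma> \<tau> n) P" for n
    using assms(3) by (intro qEHT_poly_eigenpoly assms(1,2)) (auto dest: injD)
  then obtain P where P: "\<And>n. degree (P n) = n" "\<And>n. lead_coeff (P n) = 1"
    "\<And>n. L (P n) = smult (qEHT_diag q \<sigma> \<tau> n) (P n)"
    by metis
  show ?thesis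
  proof (rule that)
    show "degree (P n) = n" "L (P n) = smult (qEHT_diag q \<sigma> \<tau> n) (P n)" for n by (fact P(1), fact P(3))
    show "0 < qint q a b (\<lambda>x. poly (P n) x * poly (P n) x * \<rho> x)" for n
      using P(2)[of n] by (intro qint_norm_pos \<rho>_pos) auto
    show "qint q a b (\<lambda>x. poly (P n) x * poly (P m) x * \<rho> x) = 0" if "m \<noteq> n" for m n
      using qint_eigenpolys_orthogonal[OF P(3) P(3)] assms(3) that by (simp add: inj_eq)
  qed
qed

end

lemma qweight_pearson:
  fixes \<sigma> \<tau> :: "real \<Rightarrow> real"
  assumes "0 < q" "q < 1" "a \<noteq> 0" "b \<noteq> 0" "c \<noteq> 0" "qweight_domain q a b c y"
    and \<sigma>: "\<And>x. \<sigma> x = s / 2 * (x - a) * (x - b)"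
    and \<sigma>2: "\<And>x. qsigma2 q \<sigma> \<tau> x = k * (x - c)"
  shows "qweight q a b c y * qsigma2 q \<sigma> \<tau> y = q * qweight q a b c (q * y) * \<sigma> (q * y)"
proof -
  have "qsigma2 q \<sigma> \<tau> y = k * (y - c)" by (rule \<sigma>2)
  also have "\<dots> = (- k * c) * (1 - y / c)" using assms(5) by (simp add: field_simps)
  also have "- k * c = q * (s / 2 * a * b)"
    using \<sigma>2[of 0] \<sigma>[of 0] by (simp add: qsigma2_def)
  finally have \<sigma>2_y: "qsigma2 q \<sigma> \<tau> y = q * (s / 2 * a * b) * (1 - y / c)" .
  have "qweight q a b c y * qsigma2 q \<sigma> \<tau> y = q * (s / 2 * a * b) * (qweight q a b c y * (1 - y / c))"
    by (simp only: \<sigma>2_y mult_ac)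
  also have "\<dots> = q * (s / 2 * a * b) * ((1 - q * y / a) * (1 - q * y / b) * qweight q a b c (q * y))"
    by (simp only: qweight_recurrence[OF assms(1,2,6)])
  also have "\<dots> = q * qweight q a b c (q * y) * \<sigma> (q * y)"
    using assms(3,4) by (simp add: \<sigma> field_simps)
  finally show ?thesis .
qed

lemma qEHT_pearson_weight_qweight:
  assumes "0 < q" "q < 1" "a < 0" "0 < b" "b < c"
    and \<sigma>: "\<And>x. poly \<sigma> x = s / 2 * (x - a) * (x - b)"
    and \<sigma>2: "\<And>x. qsigma2 q (poly \<sigma>) (poly \<tau>) x = k * (x - c)"
  shows "qEHT_pearson_weight q a b \<sigma> \<tau> (qweight q a b c) 1"
proof
  show "qweight q a b c (q ^ j * x) * qsigma2 q (poly \<sigma>) (poly \<tau>) (q ^ j * x)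
        = q * qweight q a b c (q ^ Suc j * x) * poly \<sigma> (q ^ Suc j * x)" if "x \<in> {a, b}" for x j
    using qweight_pearson[OF assms(1,2) _ _ _ qlattice_in_qweight_domain[OF assms(1-5) that] \<sigma> \<sigma>2]
      assms(3-5) by (simp add: mult.assoc)
  show "(\<lambda>j. qweight q a b c (q ^ j * x)) \<longlonglongrightarrow> 1" if "x \<in> {a, b}" for x
    using qweight_qlattice_tendsto[OF assms(1,2) qlattice_in_qweight_domain[OF assms(1-5) that, of 0]]
    by simp
qed (use assms in \<open>simp_all add: \<sigma>\<close>)

lemma qEHT_qweight_orthogonal_eigenpolys:
  assumes "0 < q" "q < 1" "a < 0" "0 < b" "b < c" "s \<noteq> 0"
    and \<sigma>: "\<sigma> = [:s / 2 * a * b, - (s / 2) * (a + b), s / 2:]"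
    and \<tau>: "degree \<tau> \<le> 1" "coeff \<tau> 1 = - (s / 2) / (1 - 1 / q)"
    and \<sigma>2: "\<And>x. qsigma2 q (poly \<sigma>) (poly \<tau>) x = k * (x - c)"
  obtains P where "\<And>n. degree (P n) = n" "\<And>n. qEHT_poly q \<sigma> \<tau> (P n) = smult (qEHT_diag q \<sigma> \<tau> n) (P n)"
    "\<And>n. 0 < qint q a b (\<lambda>x. poly (P n) x * poly (P n) x * qweight q a b c x)"
    "\<And>m n. m \<noteq> n \<Longrightarrow> qint q a b (\<lambda>x. poly (P n) x * poly (P m) x * qweight q a b c x) = 0"
proof -
  have coeff_\<sigma>: "coeff \<sigma> 2 = s / 2" by (simp add: \<sigma> numeral_2_eq_2)
  interpret qEHT_pearson_weight q a b \<sigma> \<tau> "qweight q a b c" 1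
    by (rule qEHT_pearson_weight_qweight[where s = s, OF assms(1-5) _ \<sigma>2]) (simp add: \<sigma> field_simps)
  show ?thesis
  proof (rule qEHT_orthogonal_eigenpolys)
    show "degree \<sigma> \<le> 2" by (simp add: \<sigma>)
    show "degree \<tau> \<le> 1" by (rule \<tau>(1))
    show "inj (qEHT_diag q \<sigma> \<tau>)"
      by (rule inj_qEHT_diag) (use assms(1,2,6) \<tau>(2) in \<open>simp_all add: coeff_\<sigma>\<close>)
    show "0 < qweight q a b c (q ^ j * x)" if "x \<in> {a, b}" for x j
      by (rule qweight_pos[OF assms(1,2) qlattice_in_qweight_domain[OF assms(1-5) that]])
  qed (rule that)
qed

theorem theorem5p10:
  fixes q s a1 b1 a2 t0 :: real
    and \<sigma>1 \<tau> \<sigma>2 \<rho> :: "real \<Rightarrow> real"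
    and t1 \<Lambda> :: real and lam :: "nat \<Rightarrow> real"
  assumes q: "0 < q" "q < 1"
    and s: "s \<noteq> 0"
    and \<sigma>1_def: "\<sigma>1 = (\<lambda>x. s / 2 * (x - a1) * (x - b1))"
    and t1_def: "t1 = - (s / 2) / (1 - 1 / q)"
    and \<tau>_def: "\<tau> = (\<lambda>x. t1 * x + t0)"
    and \<sigma>2_def: "\<sigma>2 = (\<lambda>x. q * (\<sigma>1 x + (1 - 1 / q) * x * \<tau> x))"
    and \<sigma>2_lin: "\<exists>k. k \<noteq> 0 \<and> (\<forall>x. \<sigma>2 x = k * (x - a2))"
    and lam_def: "lam = (\<lambda>n. - qnum q (int n) * (t1 + 1 / 2 * qnum (1 / q) (int n - 1) * s))"
    and \<Lambda>_def: "\<Lambda> = a1 + b1 - (1 - 1 / q) * t0 / (s / 2)"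
    and ord: "a1 < 0" "0 < b1" "b1 < a2"
    and \<Lambda>_neg: "\<Lambda> < 0"
    and \<rho>_def: "\<rho> = (\<lambda>x. qpoch_inf (q * x / a1) q * qpoch_inf (q * x / b1) q / qpoch_inf (x / a2) q)"
  shows "\<exists>(P :: nat \<Rightarrow> real poly) (d :: nat \<Rightarrow> real).
           (\<forall>n. degree (P n) = n \<and>
                (\<forall>x. \<sigma>1 x * qD (1 / q) (qD q (poly (P n))) x + \<tau> x * qD q (poly (P n)) x
                      + lam n * poly (P n) x = 0)) \<and>
           (\<forall>n. d n \<noteq> 0) \<and>
           (\<forall>m n. qint q a1 b1 (\<lambda>x. poly (P n) x * poly (P m) x * \<rho> x) = (if m = n then d n else 0))"
proof -
  obtain k where k: "\<And>x. \<sigma>2 x = k * (x - a2)" using \<sigma>2_lin by blast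
  define \<sigma>p where "\<sigma>p = [:s / 2 * a1 * b1, - (s / 2) * (a1 + b1), s / 2:]"
  define \<tau>p where "\<tau>p = [:t0, t1:]"
  have \<sigma>1_poly: "\<sigma>1 = poly \<sigma>p" by (simp add: fun_eq_iff \<sigma>1_def \<sigma>p_def field_simps)
  have \<tau>_poly: "\<tau> = poly \<tau>p" by (simp add: fun_eq_iff \<tau>_def \<tau>p_def)
  have \<rho>: "\<rho> = qweight q a1 b1 a2" by (simp add: fun_eq_iff \<rho>_def qweight_def)
  obtain P where P: "\<And>n. degree (P n) = n" "\<And>n. qEHT_poly q \<sigma>p \<tau>p (P n) = smult (qEHT_diag q \<sigma>p \<tau>p n) (P n)"
    "\<And>n. 0 < qint q a1 b1 (\<lambda>x. poly (P n) x * poly (P n) x * \<rho> x)"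
    "\<And>m n. m \<noteq> n \<Longrightarrow> qint q a1 b1 (\<lambda>x. poly (P n) x * poly (P m) x * \<rho> x) = 0"
    unfolding \<rho>
  proof (rule qEHT_qweight_orthogonal_eigenpolys[OF q ord s \<sigma>p_def])
    show "degree \<tau>p \<le> 1" "coeff \<tau>p 1 = - (s / 2) / (1 - 1 / q)" by (simp_all add: \<tau>p_def t1_def)
    show "qsigma2 q (poly \<sigma>p) (poly \<tau>p) x = k * (x - a2)" for x
      using k[of x] by (simp add: \<sigma>2_def qsigma2_def \<sigma>1_poly \<tau>_poly)
  qed blast
  have lam: "lam n = - qEHT_diag q \<sigma>p \<tau>p n" for n
    by (simp add: lam_def qEHT_diag_def \<sigma>p_def \<tau>p_def numeral_2_eq_2 algebra_simps)
  show ?thesis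
  proof (intro exI[of _ P] exI[of _ "\<lambda>n. qint q a1 b1 (\<lambda>x. poly (P n) x * poly (P n) x * \<rho> x)"] conjI allI)
    fix m n x
    show "degree (P n) = n" by (rule P(1))
    show "\<sigma>1 x * qD (1 / q) (qD q (poly (P n))) x + \<tau> x * qD q (poly (P n)) x + lam n * poly (P n) x = 0"
      using arg_cong[OF P(2), of "\<lambda>p. poly p x"] q
      by (simp add: poly_qEHT_poly qEHT_op_def \<sigma>1_poly \<tau>_poly lam)
    show "qint q a1 b1 (\<lambda>x. poly (P n) x * poly (P n) x * \<rho> x) \<noteq> 0" using P(3)[of n] by simp
    show "qint q a1 b1 (\<lambda>x. poly (P n) x * poly (P m) x * \<rho> x)
          = (if m = n then qint q a1 b1 (\<lambda>x. poly (P n) x * poly (P n) x * \<rho> x) else 0)"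
      using P(4)[of m n] by simp
  qed
qed

end
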